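(* Let $\mathscr{H}$ be a complex Hilbert space and let $N(\cdot)$ be a norm on $\mathbb{B}(\mathscr{H})$ which is an algebra norm ($N(XY)\leq N(X)N(Y)$ for all $X,Y\in\mathbb{B}(\mathscr{H})$) and self-adjoint ($N(X^* )=N(X)$ for all $X\in\mathbb{B}(\mathscr{H})$). Then for all $B,C\in\mathbb{B}(\mathscr{H})$, $$\frac18N(C^*C+B^*B)+\frac12\max\{w_N(B),w_N(C)\}\,|w_N(B+C)-w_N(B-C)|\leq w_{(N,e)}^2(B,C).$$
   Context: For $T\in\mathbb{B}(\mathscr{H})$: $\Re(T)=\frac12(T+T^* )$ and $w_N(T)=\sup_{\theta\in\mathbb{R}}N(\Re(e^{i\theta}T))$. For $B,C\in\mathbb{B}(\mathscr{H})$, $w_{(N,e)}(B,C)=\sup_{\lambda_1,\lambda_2\in\mathbb{C},\ |\lambda_1|^2+|\lambda_2|^2\leq 1}\sup_{\theta\in\mathbb{R}} N(\Re(e^{i\theta}(\lambda_1B+\lambda_2C)))$. *)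

theory Defs
  imports "HOL-Analysis.Analysis"
begin

text \<open>Complex Hilbert spaces (not available in the distribution): a real Banach space
carrying a complex scalar multiplication compatible with the real one and a complex
inner product (conjugate-linear in the first argument) inducing the norm.\<close>

class chilbert_space = real_normed_vector + complete_space +
  fixes scaleC :: "complex \<Rightarrow> 'a \<Rightarrow> 'a"
    and cinner :: "'a \<Rightarrow> 'a \<Rightarrow> complex"
  assumes scaleC_add_right: "scaleC a (x + y) = scaleC a x + scaleC a y"
    and scaleC_add_left: "scaleC (a + b) x = scaleC a x + scaleC b x"
    and scaleC_scaleC: "scaleC a (scaleC b x) = scaleC (a * b) x"
    and scaleC_one: "scaleC 1 x = x"
    and scaleR_scaleC: "scaleR r x = scaleC (complex_of_real r) x"
    and cinner_commute: "cinner x y = cnj (cinner y x)"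
    and cinner_add_left: "cinner (x + y) z = cinner x z + cinner y z"
    and cinner_scaleC_left: "cinner (scaleC a x) y = cnj a * cinner x y"
    and norm_cinner: "norm x = sqrt (Re (cinner x x))"

definition BH :: "('a::chilbert_space \<Rightarrow> 'a) set" where
  "BH = {T. (\<forall>x y. T (x + y) = T x + T y) \<and> (\<forall>c x. T (scaleC c x) = scaleC c (T x))
            \<and> (\<exists>K. \<forall>x. norm (T x) \<le> norm x * K)}"

definition op_add :: "('a::chilbert_space \<Rightarrow> 'a) \<Rightarrow> ('a \<Rightarrow> 'a) \<Rightarrow> 'a \<Rightarrow> 'a" where
  "op_add X Y = (\<lambda>x. X x + Y x)"

definition op_scale :: "complex \<Rightarrow> ('a::chilbert_space \<Rightarrow> 'a) \<Rightarrow> 'a \<Rightarrow> 'a" where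
  "op_scale c X = (\<lambda>x. scaleC c (X x))"

definition adj :: "('a::chilbert_space \<Rightarrow> 'a) \<Rightarrow> 'a \<Rightarrow> 'a" where
  "adj T = (THE S. S \<in> BH \<and> (\<forall>x y. cinner (T x) y = cinner x (S y)))"

definition ReOp :: "('a::chilbert_space \<Rightarrow> 'a) \<Rightarrow> 'a \<Rightarrow> 'a" where
  "ReOp T = op_scale (1/2) (op_add T (adj T))"

definition is_norm_on_BH :: "(('a::chilbert_space \<Rightarrow> 'a) \<Rightarrow> real) \<Rightarrow> bool" where
  "is_norm_on_BH N \<longleftrightarrow>
     (\<forall>X\<in>BH. 0 \<le> N X) \<and>
     (\<forall>X\<in>BH. N X = 0 \<longleftrightarrow> X = (\<lambda>_. 0)) \<and>
     (\<forall>X\<in>BH. \<forall>c. N (op_scale c X) = cmod c * N X) \<and>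
     (\<forall>X\<in>BH. \<forall>Y\<in>BH. N (op_add X Y) \<le> N X + N Y)"

definition wN :: "(('a::chilbert_space \<Rightarrow> 'a) \<Rightarrow> real) \<Rightarrow> ('a \<Rightarrow> 'a) \<Rightarrow> real" where
  "wN N T = (SUP \<theta>::real. N (ReOp (op_scale (cis \<theta>) T)))"

definition wNe :: "(('a::chilbert_space \<Rightarrow> 'a) \<Rightarrow> real) \<Rightarrow> ('a \<Rightarrow> 'a) \<Rightarrow> ('a \<Rightarrow> 'a) \<Rightarrow> real" where
  "wNe N B C = (SUP l \<in> {(l1, l2). (cmod l1)\<^sup>2 + (cmod l2)\<^sup>2 \<le> 1}.
                 SUP \<theta>::real. N (ReOp (op_scale (cis \<theta>)
                    (op_add (op_scale (fst l) B) (op_scale (snd l) C)))))"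

end

theory Submission
  imports Defs
begin

(* Put P = B + C and Q = B - C, a = w_N(P), b = w_N(Q), W = w_(N,e)(B,C).
   The parallelogram identity P*P + Q*Q = 2 (B*B + C*C), the algebra and self-adjointness
   of N, and N(X) <= 2 w_N(X) (from the Cartesian decomposition X = Re X + i Re(-i X))
   give N(C*C + B*B) <= 2 (a^2 + b^2).  From 2B = P + Q and 2C = P - Q,
   max{w_N(B), w_N(C)} <= (a + b) / 2, so the left-hand side is at most
   (a^2 + b^2 + (a + b) |a - b|) / 4 = max(a, b)^2 / 2.  Finally (1, 1)/sqrt 2 and
   (1, -1)/sqrt 2 are admissible in W, whence max(a, b) <= sqrt 2 W.
   Adjoints exist by the Riesz representation theorem, proved by minimising
   |x|^2 - 2 Re g(x) over the complete space. *)

section \<open>Complex inner product spaces\<close>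

lemma cinner_add_right: "cinner x (y + z) = cinner x y + cinner x (z::'a::chilbert_space)"
  using cinner_commute[of x "y + z"] cinner_commute[of y x] cinner_commute[of z x]
  by (simp add: cinner_add_left)

lemma cinner_scaleC_right: "cinner x (scaleC c y) = c * cinner x (y::'a::chilbert_space)"
  using cinner_commute[of x "scaleC c y"] cinner_commute[of y x] by (simp add: cinner_scaleC_left)

lemma scaleC_of_real: "scaleC (complex_of_real r) x = scaleR r (x::'a::chilbert_space)"
  by (simp add: scaleR_scaleC)

lemma scaleC_zero_left [simp]: "scaleC 0 (x::'a::chilbert_space) = 0"
  using scaleC_of_real[of 0 x] by simp

lemma scaleC_minus_one: "scaleC (-1) (x::'a::chilbert_space) = - x"
  using scaleC_of_real[of "-1" x] by simp

lemma scaleC_two: "scaleC 2 (x::'a::chilbert_space) = x + x"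
  using scaleC_add_left[of 1 1 x] by (simp add: scaleC_one)

lemma cinner_scaleR_right: "cinner x (scaleR r y) = of_real r * cinner x (y::'a::chilbert_space)"
  by (simp add: scaleR_scaleC cinner_scaleC_right)

lemma cinner_scaleR_left: "cinner (scaleR r x) y = of_real r * cinner x (y::'a::chilbert_space)"
  by (simp add: scaleR_scaleC cinner_scaleC_left)

lemma cinner_minus_left: "cinner (- x) (y::'a::chilbert_space) = - cinner x y"
  using cinner_scaleR_left[of "-1" x y] by simp

lemma cinner_minus_right: "cinner y (- x::'a::chilbert_space) = - cinner y x"
  using cinner_scaleR_right[of y "-1" x] by simp

lemma cinner_diff_left: "cinner (x - z) (y::'a::chilbert_space) = cinner x y - cinner z y"
  using cinner_add_left[of x "- z" y] by (simp add: cinner_minus_left)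

lemma power2_norm_eq_cinner: "(norm x)\<^sup>2 = Re (cinner x (x::'a::chilbert_space))"
proof -
  have "0 \<le> Re (cinner x x)"
    using norm_ge_zero[of x] by (simp only: norm_cinner real_sqrt_ge_0_iff)
  then show ?thesis by (simp add: norm_cinner)
qed

lemma Re_cinner_commute: "Re (cinner y (x::'a::chilbert_space)) = Re (cinner x y)"
  by (metis cinner_commute complex_cnj_cancel_iff cnj.sel(1))

lemma power2_norm_add:
  "(norm (x + y))\<^sup>2 = (norm x)\<^sup>2 + 2 * Re (cinner x y) + (norm (y::'a::chilbert_space))\<^sup>2"
  using Re_cinner_commute[of x y]
  by (simp add: power2_norm_eq_cinner cinner_add_left cinner_add_right)

lemma cinner_eqI: "(\<And>x. cinner u x = cinner v (x::'a::chilbert_space)) \<Longrightarrow> u = v"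
  using power2_norm_eq_cinner[of "u - v"] by (simp add: cinner_diff_left)

lemma norm_scaleC: "norm (scaleC c (x::'a::chilbert_space)) = cmod c * norm x"
proof -
  have "cinner (scaleC c x) (scaleC c x) = (cnj c * c) * cinner x x"
    by (simp add: cinner_scaleC_left cinner_scaleC_right)
  also have "cnj c * c = complex_of_real ((cmod c)\<^sup>2)"
    using complex_norm_square[of c] by (simp add: mult.commute)
  finally have "(norm (scaleC c x))\<^sup>2 = (cmod c * norm x)\<^sup>2"
    by (simp add: power2_norm_eq_cinner power_mult_distrib)
  then show ?thesis by (simp add: power2_eq_imp_eq)
qed

lemma abs_Re_cinner_le_norm: "\<bar>Re (cinner x (y::'a::chilbert_space))\<bar> \<le> norm x * norm y"
proof (cases "y = 0")
  case True
  then show ?thesis using cinner_scaleR_right[of x 0 0] by simp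
next
  case False
  define r where "r = Re (cinner x y)"
  have expand: "(norm (x - scaleR t y))\<^sup>2 = (norm x)\<^sup>2 - 2 * t * r + t\<^sup>2 * (norm y)\<^sup>2" for t
    using power2_norm_add[of x "- scaleR t y"]
    by (simp add: cinner_minus_right cinner_scaleR_right r_def power_mult_distrib)
  have ny: "0 < (norm y)\<^sup>2" using False by simp
  have "0 \<le> (norm (x - scaleR (r / (norm y)\<^sup>2) y))\<^sup>2" by simp
  also have "\<dots> = (norm x)\<^sup>2 - r\<^sup>2 / (norm y)\<^sup>2"
    unfolding expand using ny by (simp add: power2_eq_square field_simps)
  finally have "r\<^sup>2 \<le> (norm x * norm y)\<^sup>2"
    using ny by (simp add: field_simps power_mult_distrib)
  then have "\<bar>r\<bar> \<le> \<bar>norm x * norm y\<bar>" by (simp only: abs_le_square_iff)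
  then show ?thesis unfolding r_def by simp
qed

lemma parallelogram_law:
  "(norm (x + y))\<^sup>2 + (norm (x - y))\<^sup>2 = 2 * (norm x)\<^sup>2 + 2 * (norm (y::'a::chilbert_space))\<^sup>2"
  using power2_norm_add[of x y] power2_norm_add[of x "- y"] by (simp add: cinner_minus_right)

section \<open>The Riesz representation theorem\<close>

lemma linear_coeff_eq_0_if_quadratic_nonneg:
  fixes c d :: real
  assumes nonneg: "\<And>t. 0 \<le> t * d + t\<^sup>2 * c"
  shows "d = 0"
proof -
  define s where "s = \<bar>c\<bar> + 1"
  have s: "0 < s" by (simp add: s_def)
  have "0 \<le> (- d / s) * d + (- d / s)\<^sup>2 * c" by (rule nonneg)
  also have "\<dots> \<le> (- d / s) * d + (- d / s)\<^sup>2 * (s - 1)"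
    unfolding s_def by (intro add_left_mono mult_left_mono) auto
  also have "\<dots> = - (d / s)\<^sup>2"
    using s by (simp add: power2_eq_square field_simps)
  finally show "d = 0" using s by simp
qed

lemma minimizing_sequence_Cauchy:
  fixes f :: "'a::chilbert_space \<Rightarrow> real"
  assumes f: "bounded_linear f"
    and lower: "\<And>x. \<mu> \<le> (norm x)\<^sup>2 - 2 * f x"
    and lim: "(\<lambda>n. (norm (xs n))\<^sup>2 - 2 * f (xs n)) \<longlonglongrightarrow> \<mu>"
  shows "Cauchy xs"
proof (rule CauchyI)
  define E where "E x = (norm x)\<^sup>2 - 2 * f x" for x
  have close: "(norm (x - y))\<^sup>2 \<le> 2 * E x + 2 * E y - 4 * \<mu>" for x y
  proof -
    define m where "m = scaleR (1/2) (x + y)"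
    have "f m = (f x + f y) / 2"
      unfolding m_def by (simp add: linear_simps(5)[OF f] linear_simps(1)[OF f])
    moreover have "(norm m)\<^sup>2 = (norm (x + y))\<^sup>2 / 4"
      by (simp add: m_def power_divide)
    ultimately have "(norm (x - y))\<^sup>2 = 2 * E x + 2 * E y - 4 * E m"
      using parallelogram_law[of x y] unfolding E_def by (simp add: algebra_simps)
    then show ?thesis using lower[of m] by (simp add: E_def)
  qed
  fix e :: real
  assume e: "0 < e"
  have "\<forall>\<^sub>F n in sequentially. E (xs n) < \<mu> + e\<^sup>2 / 8"
    using order_tendstoD(2)[OF lim] e by (simp add: E_def)
  then obtain M where M: "\<And>n. M \<le> n \<Longrightarrow> E (xs n) < \<mu> + e\<^sup>2 / 8"
    unfolding eventually_sequentially by blast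
  have "norm (xs m - xs n) < e" if "M \<le> m" "M \<le> n" for m n
  proof -
    have "0 < e\<^sup>2" using e by simp
    then have "(norm (xs m - xs n))\<^sup>2 < e\<^sup>2"
      using close[of "xs m" "xs n"] M[OF that(1)] M[OF that(2)] by linarith
    then show ?thesis using e by (simp add: power_less_imp_less_base)
  qed
  then show "\<exists>M. \<forall>m\<ge>M. \<forall>n\<ge>M. norm (xs m - xs n) < e" by blast
qed

lemma quadratic_functional_has_minimizer:
  fixes f :: "'a::chilbert_space \<Rightarrow> real"
  assumes f: "bounded_linear f"
  shows "\<exists>z. \<forall>x. (norm z)\<^sup>2 - 2 * f z \<le> (norm x)\<^sup>2 - 2 * f x"
proof -
  define E where "E x = (norm x)\<^sup>2 - 2 * f x" for x
  obtain K where K: "\<And>x. norm (f x) \<le> norm x * K"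
    using bounded_linear.bounded[OF f] by blast
  have "- K\<^sup>2 \<le> E x" for x
    using K[of x] abs_ge_self[of "f x"] zero_le_power2[of "norm x - K"]
    unfolding E_def by (simp add: power2_eq_square algebra_simps)
  then have bdd: "bdd_below (range E)" by (intro bdd_belowI2)
  define \<mu> where "\<mu> = Inf (range E)"
  have \<mu>_le: "\<mu> \<le> E x" for x
    unfolding \<mu>_def using bdd by (intro cInf_lower) auto
  have "\<mu> \<in> closure (range E)"
    unfolding \<mu>_def using bdd by (intro closure_contains_Inf) auto
  then obtain u where u: "\<And>n. u n \<in> range E" and "u \<longlonglongrightarrow> \<mu>"
    unfolding closure_sequential by blast
  moreover define xs where "xs n = inv E (u n)" for n
  moreover have "(\<lambda>n. E (xs n)) = u"
    using u by (simp add: xs_def f_inv_into_f fun_eq_iff)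
  ultimately have E_xs: "(\<lambda>n. E (xs n)) \<longlonglongrightarrow> \<mu>" by simp
  then have "Cauchy xs"
    using minimizing_sequence_Cauchy[OF f] \<mu>_le unfolding E_def by blast
  then obtain z where "xs \<longlonglongrightarrow> z"
    unfolding Cauchy_convergent_iff convergent_def by blast
  then have "(\<lambda>n. E (xs n)) \<longlonglongrightarrow> E z"
    unfolding E_def by (intro tendsto_intros bounded_linear.tendsto[OF f])
  then have "E z = \<mu>" using E_xs by (rule LIMSEQ_unique)
  then show ?thesis using \<mu>_le unfolding E_def by metis
qed

lemma riesz_representation_Re:
  fixes f :: "'a::chilbert_space \<Rightarrow> real"
  assumes f: "bounded_linear f"
  shows "\<exists>z. \<forall>x. Re (cinner z x) = f x"
proof -
  obtain z where z: "\<And>x. (norm z)\<^sup>2 - 2 * f z \<le> (norm x)\<^sup>2 - 2 * f x"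
    using quadratic_functional_has_minimizer[OF f] by blast
  have "Re (cinner z h) = f h" for h
  proof -
    have "0 \<le> t * (2 * (Re (cinner z h) - f h)) + t\<^sup>2 * (norm h)\<^sup>2" for t
      using z[of "z + scaleR t h"] power2_norm_add[of z "scaleR t h"]
      by (simp add: cinner_scaleR_right linear_simps(1)[OF f] linear_simps(5)[OF f]
          power_mult_distrib algebra_simps)
    then show ?thesis using linear_coeff_eq_0_if_quadratic_nonneg by fastforce
  qed
  then show ?thesis by blast
qed

lemma riesz_representation:
  fixes g :: "'a::chilbert_space \<Rightarrow> complex"
  assumes bl: "bounded_linear (\<lambda>x. Re (g x))" and g_scaleC: "\<And>c x. g (scaleC c x) = c * g x"
  shows "\<exists>z. \<forall>x. g x = cinner z x"
proof -
  obtain z where z: "\<And>x. Re (cinner z x) = Re (g x)"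
    using riesz_representation_Re[OF bl] by metis
  have "g x = cinner z x" for x
  proof (rule complex_eqI)
    show "Re (g x) = Re (cinner z x)" by (rule z[symmetric])
    show "Im (g x) = Im (cinner z x)"
      using z[of "scaleC \<i> x"] by (simp add: g_scaleC cinner_scaleC_right)
  qed
  then show ?thesis by blast
qed

section \<open>Bounded operators and adjoints\<close>

lemma op_add_apply [simp]: "op_add X Y x = X x + Y x"
  by (simp add: op_add_def)

lemma op_scale_apply [simp]: "op_scale c X x = scaleC c (X x)"
  by (simp add: op_scale_def)

lemma op_scale_one [simp]: "op_scale 1 X = X"
  by (simp add: fun_eq_iff scaleC_one)

lemma op_scale_op_scale: "op_scale a (op_scale b X) = op_scale (a * b) X"
  by (simp add: fun_eq_iff scaleC_scaleC)

lemma bounded_linear_scaleC: "bounded_linear (scaleC c :: 'a::chilbert_space \<Rightarrow> 'a)"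
proof (rule bounded_linear_intro)
  show "scaleC c (x + y) = scaleC c x + scaleC c (y::'a)" for x y
    by (rule scaleC_add_right)
  show "scaleC c (scaleR r x) = scaleR r (scaleC c (x::'a))" for r x
    by (simp add: scaleR_scaleC scaleC_scaleC mult.commute)
  show "norm (scaleC c (x::'a)) \<le> norm x * cmod c" for x
    by (simp add: norm_scaleC mult.commute)
qed

lemma BH_I:
  assumes "\<And>x y. T (x + y) = T x + T y" and "\<And>c x. T (scaleC c x) = scaleC c (T x)"
    and "\<And>x. norm (T x) \<le> norm x * K"
  shows "T \<in> BH"
  unfolding BH_def using assms by blast

lemma BH_iff: "T \<in> BH \<longleftrightarrow> bounded_linear T \<and> (\<forall>c x. T (scaleC c x) = scaleC c (T x))"
proof
  assume "T \<in> BH"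
  then show "bounded_linear T \<and> (\<forall>c x. T (scaleC c x) = scaleC c (T x))"
    unfolding BH_def by (auto simp: scaleR_scaleC intro: bounded_linear_intro)
next
  assume "bounded_linear T \<and> (\<forall>c x. T (scaleC c x) = scaleC c (T x))"
  then show "T \<in> BH"
    unfolding BH_def by (auto simp: linear_simps(1) dest: bounded_linear.bounded)
qed

lemma BH_imp_bounded_linear: "T \<in> BH \<Longrightarrow> bounded_linear T"
  by (simp add: BH_iff)

lemma BH_scaleC: "T \<in> BH \<Longrightarrow> T (scaleC c x) = scaleC c (T x)"
  by (simp add: BH_iff)

lemma BH_op_add: "X \<in> BH \<Longrightarrow> Y \<in> BH \<Longrightarrow> op_add X Y \<in> BH"
  by (simp add: BH_iff op_add_def bounded_linear_add scaleC_add_right)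

lemma BH_op_scale: "X \<in> BH \<Longrightarrow> op_scale c X \<in> BH"
  using bounded_linear_compose[OF bounded_linear_scaleC, of X c]
  by (simp add: BH_iff op_scale_def o_def scaleC_scaleC mult.commute)

lemma BH_comp: "X \<in> BH \<Longrightarrow> Y \<in> BH \<Longrightarrow> X \<circ> Y \<in> BH"
  using bounded_linear_compose[of X Y] by (simp add: BH_iff o_def)

lemma adjoint_exists:
  assumes T: "T \<in> BH"
  shows "\<exists>S\<in>BH. \<forall>x y. cinner (T x) y = cinner x (S y)"
proof -
  obtain K where K0: "0 \<le> K" and K: "\<And>x. norm (T x) \<le> norm x * K"
    using bounded_linear.nonneg_bounded[OF BH_imp_bounded_linear[OF T]] by blast
  have "\<exists>z. \<forall>x. cinner y (T x) = cinner z x" for y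
  proof (rule riesz_representation)
    show "bounded_linear (\<lambda>x. Re (cinner y (T x)))"
    proof (rule bounded_linear_intro)
      show "Re (cinner y (T (a + b))) = Re (cinner y (T a)) + Re (cinner y (T b))" for a b
        using BH_imp_bounded_linear[OF T] by (simp add: linear_simps(1) cinner_add_right)
      show "Re (cinner y (T (scaleR r a))) = r *\<^sub>R Re (cinner y (T a))" for r a
        using BH_imp_bounded_linear[OF T] by (simp add: linear_simps(5) cinner_scaleR_right)
      show "norm (Re (cinner y (T a))) \<le> norm a * (norm y * K)" for a
        using abs_Re_cinner_le_norm[of y "T a"] mult_left_mono[OF K[of a], of "norm y"]
        by (simp add: mult_ac)
    qed
    show "cinner y (T (scaleC c a)) = c * cinner y (T a)" for c a
      by (simp add: BH_scaleC[OF T] cinner_scaleC_right)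
  qed
  then obtain S where S: "\<And>y x. cinner y (T x) = cinner (S y) x"
    by metis
  have S_adj: "cinner (T x) y = cinner x (S y)" for x y
    using cinner_commute[of "T x" y] cinner_commute[of x "S y"] S by simp
  have "S \<in> BH"
  proof (rule BH_I)
    show "S (a + b) = S a + S b" for a b
      by (rule cinner_eqI) (simp add: S[symmetric] cinner_add_left)
    show "S (scaleC c a) = scaleC c (S a)" for c a
      by (rule cinner_eqI) (simp add: S[symmetric] cinner_scaleC_left)
    show "norm (S y) \<le> norm y * K" for y
    proof (cases "S y = 0")
      case True
      then show ?thesis using K0 by simp
    next
      case False
      have "norm (S y) * norm (S y) = Re (cinner y (T (S y)))"
        by (simp add: S power2_norm_eq_cinner[symmetric] power2_eq_square)
      also have "\<dots> \<le> norm y * norm (T (S y))"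
        using abs_Re_cinner_le_norm[of y "T (S y)"] by simp
      also have "\<dots> \<le> (norm y * K) * norm (S y)"
        using mult_left_mono[OF K[of "S y"], of "norm y"] by (simp add: mult_ac)
      finally show ?thesis using False by (simp add: mult_le_cancel_right)
    qed
  qed
  with S_adj show ?thesis by blast
qed

lemma adjoint_unique:
  assumes "\<And>x y. cinner x (S1 y) = cinner x (S2 y :: 'a::chilbert_space)"
  shows "S1 = S2"
proof
  fix y
  show "S1 y = S2 y"
    by (rule cinner_eqI) (metis assms cinner_commute)
qed

lemma
  assumes "T \<in> BH"
  shows adj_BH: "adj T \<in> BH"
    and cinner_adj: "cinner (T x) y = cinner x (adj T y)"
proof -
  have "\<exists>!S. S \<in> BH \<and> (\<forall>x y. cinner (T x) y = cinner x (S y))"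
    using adjoint_exists[OF assms] by (metis adjoint_unique)
  then have "adj T \<in> BH \<and> (\<forall>x y. cinner (T x) y = cinner x (adj T y))"
    unfolding adj_def by (rule theI')
  then show "adj T \<in> BH" "cinner (T x) y = cinner x (adj T y)" by blast+
qed

lemma adj_eqI:
  assumes "T \<in> BH" and "\<And>x y. cinner (T x) y = cinner x (S y)"
  shows "adj T = S"
  by (rule adjoint_unique) (simp add: cinner_adj[OF assms(1), symmetric] assms(2))

lemma adj_op_add: "X \<in> BH \<Longrightarrow> Y \<in> BH \<Longrightarrow> adj (op_add X Y) = op_add (adj X) (adj Y)"
  by (rule adj_eqI) (simp_all add: BH_op_add cinner_add_left cinner_add_right cinner_adj)

lemma adj_op_scale: "X \<in> BH \<Longrightarrow> adj (op_scale c X) = op_scale (cnj c) (adj X)"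
  by (rule adj_eqI) (simp_all add: BH_op_scale cinner_scaleC_left cinner_scaleC_right cinner_adj)

lemma adj_comp_parallelogram:
  assumes B: "B \<in> BH" and C: "C \<in> BH"
  shows "op_add (adj (op_add B C) \<circ> op_add B C)
                (adj (op_add B (op_scale (-1) C)) \<circ> op_add B (op_scale (-1) C))
       = op_scale 2 (op_add (adj C \<circ> C) (adj B \<circ> B))"
proof
  fix x
  have lin: "bounded_linear (adj B)" "bounded_linear (adj C)"
    using B C by (simp_all add: BH_imp_bounded_linear adj_BH)
  show "op_add (adj (op_add B C) \<circ> op_add B C)
          (adj (op_add B (op_scale (-1) C)) \<circ> op_add B (op_scale (-1) C)) x
      = op_scale 2 (op_add (adj C \<circ> C) (adj B \<circ> B)) x"
    using B C
    by (simp add: adj_op_add adj_op_scale BH_op_scale scaleC_minus_one scaleC_two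
        linear_simps[OF lin(1)] linear_simps[OF lin(2)] algebra_simps)
qed

section \<open>The numerical radius \<open>w\<^sub>N\<close>\<close>

lemma ReOp_BH: "X \<in> BH \<Longrightarrow> ReOp X \<in> BH"
  unfolding ReOp_def by (intro BH_op_scale BH_op_add adj_BH)

lemma ReOp_op_add:
  "X \<in> BH \<Longrightarrow> Y \<in> BH \<Longrightarrow> ReOp (op_add X Y) = op_add (ReOp X) (ReOp Y)"
  by (simp add: ReOp_def adj_op_add fun_eq_iff scaleC_add_right add_ac)

lemma ReOp_op_scale_of_real:
  "X \<in> BH \<Longrightarrow> ReOp (op_scale (of_real r) X) = op_scale (of_real r) (ReOp X)"
  by (simp add: ReOp_def adj_op_scale fun_eq_iff scaleC_add_right scaleC_scaleC mult.commute)

lemma cartesian_decomposition: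
  assumes "X \<in> BH"
  shows "X = op_add (ReOp X) (op_scale \<i> (ReOp (op_scale (- \<i>) X)))"
proof
  fix x
  have "op_add (ReOp X) (op_scale \<i> (ReOp (op_scale (- \<i>) X))) x
      = scaleC (1/2) (X x) + scaleC (1/2) (adj X x) + (scaleC (1/2) (X x) + scaleC (- (1/2)) (adj X x))"
    using assms by (simp add: ReOp_def adj_op_scale scaleC_add_right scaleC_scaleC)
  also have "\<dots> = scaleC (1/2 + 1/2) (X x) + scaleC (1/2 + - (1/2)) (adj X x)"
    by (simp only: scaleC_add_left add_ac)
  finally show "X x = op_add (ReOp X) (op_scale \<i> (ReOp (op_scale (- \<i>) X))) x"
    by (simp add: scaleC_one)
qed

lemma wN_least: "(\<And>t. N (ReOp (op_scale (cis t) X)) \<le> b) \<Longrightarrow> wN N X \<le> b"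
  unfolding wN_def by (rule cSUP_least) auto

locale BH_norm =
  fixes N :: "('a::chilbert_space \<Rightarrow> 'a) \<Rightarrow> real"
  assumes is_norm: "is_norm_on_BH N"
begin

lemma N_nonneg: "X \<in> BH \<Longrightarrow> 0 \<le> N X"
  using is_norm by (simp add: is_norm_on_BH_def)

lemma N_op_scale: "X \<in> BH \<Longrightarrow> N (op_scale c X) = cmod c * N X"
  using is_norm by (simp add: is_norm_on_BH_def)

lemma N_triangle: "X \<in> BH \<Longrightarrow> Y \<in> BH \<Longrightarrow> N (op_add X Y) \<le> N X + N Y"
  using is_norm by (simp add: is_norm_on_BH_def)

end

locale selfadjoint_BH_norm = BH_norm +
  assumes N_adj: "X \<in> BH \<Longrightarrow> N (adj X) = N X"
begin

lemma N_ReOp_le: "X \<in> BH \<Longrightarrow> N (ReOp X) \<le> N X"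
  using N_triangle[of X "adj X"] N_op_scale[of "op_add X (adj X)" "1/2"]
  by (simp add: ReOp_def BH_op_add adj_BH N_adj)

lemma N_ReOp_rotation_le:
  assumes X: "X \<in> BH"
  shows "N (ReOp (op_scale (cis t) X)) \<le> N X"
proof -
  have "N (ReOp (op_scale (cis t) X)) \<le> N (op_scale (cis t) X)"
    using X by (intro N_ReOp_le BH_op_scale)
  also have "\<dots> = N X"
    using X by (simp add: N_op_scale)
  finally show ?thesis .
qed

lemma wN_upper: "X \<in> BH \<Longrightarrow> N (ReOp (op_scale (cis t) X)) \<le> wN N X"
  unfolding wN_def by (rule cSUP_upper) (auto intro: bdd_aboveI2 N_ReOp_rotation_le)

lemma wN_le_N: "X \<in> BH \<Longrightarrow> wN N X \<le> N X"
  by (intro wN_least N_ReOp_rotation_le)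

lemma wN_nonneg: "X \<in> BH \<Longrightarrow> 0 \<le> wN N X"
  using N_nonneg[OF ReOp_BH[OF BH_op_scale]] wN_upper order_trans by blast

lemma N_le_2wN:
  assumes X: "X \<in> BH"
  shows "N X \<le> 2 * wN N X"
proof -
  have "cis 0 = 1" and "cis (- (pi / 2)) = - \<i>"
    by (simp_all add: complex_eq_iff)
  then have "N X \<le> N (ReOp (op_scale (cis 0) X)) + N (ReOp (op_scale (cis (- (pi / 2))) X))"
    using N_triangle N_op_scale cartesian_decomposition[OF X]
    by (metis BH_op_scale ReOp_BH X mult_1 norm_ii op_scale_one)
  also have "\<dots> \<le> wN N X + wN N X"
    by (intro add_mono wN_upper X)
  finally show ?thesis by simp
qed

lemma wN_op_add:
  assumes X: "X \<in> BH" and Y: "Y \<in> BH"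
  shows "wN N (op_add X Y) \<le> wN N X + wN N Y"
proof (rule wN_least)
  fix t
  have "op_scale (cis t) (op_add X Y) = op_add (op_scale (cis t) X) (op_scale (cis t) Y)"
    by (simp add: fun_eq_iff scaleC_add_right)
  then have "N (ReOp (op_scale (cis t) (op_add X Y)))
      = N (op_add (ReOp (op_scale (cis t) X)) (ReOp (op_scale (cis t) Y)))"
    using X Y by (simp add: ReOp_op_add BH_op_scale)
  also have "\<dots> \<le> N (ReOp (op_scale (cis t) X)) + N (ReOp (op_scale (cis t) Y))"
    using X Y by (intro N_triangle ReOp_BH BH_op_scale)
  also have "\<dots> \<le> wN N X + wN N Y"
    using X Y by (intro add_mono wN_upper)
  finally show "N (ReOp (op_scale (cis t) (op_add X Y))) \<le> wN N X + wN N Y" .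
qed

lemma wN_op_scale_le:
  assumes X: "X \<in> BH"
  shows "wN N (op_scale c X) \<le> cmod c * wN N X"
proof (rule wN_least)
  fix t
  have "cis t * c = of_real (cmod c) * cis (t + Arg c)"
    by (metis cis_mult mult.left_commute rcis_cmod_Arg rcis_def)
  then have "op_scale (cis t) (op_scale c X) = op_scale (of_real (cmod c)) (op_scale (cis (t + Arg c)) X)"
    by (simp add: op_scale_op_scale mult.commute)
  then have "N (ReOp (op_scale (cis t) (op_scale c X)))
      = cmod c * N (ReOp (op_scale (cis (t + Arg c)) X))"
    using X by (simp add: ReOp_op_scale_of_real BH_op_scale ReOp_BH N_op_scale)
  also have "\<dots> \<le> cmod c * wN N X"
    using X by (intro mult_left_mono wN_upper) auto
  finally show "N (ReOp (op_scale (cis t) (op_scale c X))) \<le> cmod c * wN N X" .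
qed

lemma wN_op_scale:
  assumes X: "X \<in> BH"
  shows "wN N (op_scale c X) = cmod c * wN N X"
proof (cases "c = 0")
  case True
  have "wN N (op_scale 0 X) = 0"
    using wN_op_scale_le[OF X, of 0] wN_nonneg[OF BH_op_scale[OF X], of 0] by simp
  then show ?thesis using True by simp
next
  case False
  have "wN N X = wN N (op_scale (inverse c) (op_scale c X))"
    using False by (simp add: op_scale_op_scale)
  also have "\<dots> \<le> cmod (inverse c) * wN N (op_scale c X)"
    using X by (intro wN_op_scale_le BH_op_scale)
  finally have "cmod c * wN N X \<le> wN N (op_scale c X)"
    using False by (simp add: norm_divide field_simps)
  then show ?thesis using wN_op_scale_le[OF X, of c] by simp
qed


lemma wN_le_wNe:
  assumes B: "B \<in> BH" and C: "C \<in> BH" and l: "(cmod l1)\<^sup>2 + (cmod l2)\<^sup>2 \<le> 1"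
  shows "wN N (op_add (op_scale l1 B) (op_scale l2 C)) \<le> wNe N B C"
proof -
  define D where "D = {(l1, l2). (cmod l1)\<^sup>2 + (cmod l2)\<^sup>2 \<le> (1::real)}"
  define F where "F l = wN N (op_add (op_scale (fst l) B) (op_scale (snd l) C))" for l
  have "F l \<le> N B + N C" if "l \<in> D" for l
  proof -
    obtain m1 m2 where l_eq: "l = (m1, m2)" by fastforce
    have "(cmod m1)\<^sup>2 + (cmod m2)\<^sup>2 \<le> 1"
      using that by (simp add: D_def l_eq)
    then have "(cmod m1)\<^sup>2 \<le> 1" "(cmod m2)\<^sup>2 \<le> 1"
      using zero_le_power2[of "cmod m1"] zero_le_power2[of "cmod m2"] by linarith+
    then have m: "cmod m1 \<le> 1" "cmod m2 \<le> 1"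
      by (simp_all add: abs_square_le_1)
    have "F l \<le> N (op_add (op_scale m1 B) (op_scale m2 C))"
      unfolding F_def l_eq using B C by (simp add: wN_le_N BH_op_add BH_op_scale)
    also have "\<dots> \<le> cmod m1 * N B + cmod m2 * N C"
      using B C N_triangle[OF BH_op_scale BH_op_scale] by (simp add: N_op_scale)
    also have "\<dots> \<le> N B + N C"
      using m N_nonneg[OF B] N_nonneg[OF C]
      by (intro add_mono) (simp_all add: mult_left_le_one_le)
    finally show ?thesis .
  qed
  then have "F (l1, l2) \<le> (SUP l\<in>D. F l)"
    using l by (intro cSUP_upper bdd_aboveI2) (auto simp: D_def)
  then show ?thesis by (simp add: F_def D_def wNe_def wN_def)
qed

lemma wN_combination_le_wNe:
  assumes B: "B \<in> BH" and C: "C \<in> BH"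
  shows "wN N (op_add (op_scale l1 B) (op_scale l2 C))
         \<le> sqrt ((cmod l1)\<^sup>2 + (cmod l2)\<^sup>2) * wNe N B C"
proof -
  define s where "s = sqrt ((cmod l1)\<^sup>2 + (cmod l2)\<^sup>2)"
  have s: "0 \<le> s" by (simp add: s_def)
  \<comment> \<open>also for \<open>s = 0\<close>, where \<open>l / 0 = 0\<close> but \<open>l1 = l2 = 0\<close>\<close>
  have rescale: "l = of_real s * (l / of_real s)" if "l = l1 \<or> l = l2" for l
  proof (cases "s = 0")
    case True
    then have "l1 = 0" "l2 = 0" by (simp_all add: s_def add_nonneg_eq_0_iff)
    then show ?thesis using that by auto
  qed simp
  have "(cmod (l1 / of_real s))\<^sup>2 + (cmod (l2 / of_real s))\<^sup>2 = ((cmod l1)\<^sup>2 + (cmod l2)\<^sup>2) / s\<^sup>2"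
    by (simp add: norm_divide power_divide add_divide_distrib)
  also have "\<dots> \<le> 1"
    by (simp add: s_def)
  finally have unit: "(cmod (l1 / of_real s))\<^sup>2 + (cmod (l2 / of_real s))\<^sup>2 \<le> 1" .
  have "op_add (op_scale l1 B) (op_scale l2 C)
      = op_scale (of_real s) (op_add (op_scale (l1 / of_real s) B) (op_scale (l2 / of_real s) C))"
    using rescale[of l1] rescale[of l2]
    by (simp add: fun_eq_iff scaleC_add_right scaleC_scaleC)
  then have "wN N (op_add (op_scale l1 B) (op_scale l2 C))
      = s * wN N (op_add (op_scale (l1 / of_real s) B) (op_scale (l2 / of_real s) C))"
    using B C s by (simp add: wN_op_scale BH_op_add BH_op_scale)
  also have "\<dots> \<le> s * wNe N B C"
    using wN_le_wNe[OF B C unit] s by (rule mult_left_mono)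
  finally show ?thesis by (simp add: s_def)
qed

lemma max_wN_sum_diff_square_le:
  assumes B: "B \<in> BH" and C: "C \<in> BH"
  shows "(max (wN N (op_add B C)) (wN N (op_add B (op_scale (-1) C))))\<^sup>2 \<le> 2 * (wNe N B C)\<^sup>2"
proof -
  let ?a = "wN N (op_add B C)" and ?b = "wN N (op_add B (op_scale (-1) C))"
  have "0 \<le> ?a" "0 \<le> ?b"
    using B C by (simp_all add: wN_nonneg BH_op_add BH_op_scale)
  moreover have "?a \<le> sqrt 2 * wNe N B C" "?b \<le> sqrt 2 * wNe N B C"
    using wN_combination_le_wNe[OF B C, of 1 1] wN_combination_le_wNe[OF B C, of 1 "-1"]
    by simp_all
  ultimately have "?a\<^sup>2 \<le> (sqrt 2 * wNe N B C)\<^sup>2" "?b\<^sup>2 \<le> (sqrt 2 * wNe N B C)\<^sup>2"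
    by (simp_all add: power_mono)
  then show ?thesis
    by (simp add: max_def power_mult_distrib)
qed

lemma two_max_wN_le:
  assumes B: "B \<in> BH" and C: "C \<in> BH"
  shows "2 * max (wN N B) (wN N C) \<le> wN N (op_add B C) + wN N (op_add B (op_scale (-1) C))"
proof -
  define P where "P = op_add B C"
  define Q where "Q = op_add B (op_scale (-1) C)"
  have P: "P \<in> BH" and Q: "Q \<in> BH"
    using B C by (simp_all add: P_def Q_def BH_op_add BH_op_scale)
  have "op_scale 2 B = op_add P Q" and "op_scale 2 C = op_add P (op_scale (-1) Q)"
    by (simp_all add: P_def Q_def fun_eq_iff scaleC_two scaleC_minus_one)
  then have "2 * wN N B \<le> wN N P + wN N Q" and "2 * wN N C \<le> wN N P + wN N Q"
    using wN_op_add[OF P Q] wN_op_add[OF P BH_op_scale[OF Q, of "-1"]]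
      wN_op_scale[OF B, of 2] wN_op_scale[OF C, of 2] wN_op_scale[OF Q, of "-1"]
    by simp_all
  then show ?thesis by (simp add: P_def Q_def)
qed

lemma N_sum_adj_comp_le:
  assumes algebra: "\<And>X Y. X \<in> BH \<Longrightarrow> Y \<in> BH \<Longrightarrow> N (X \<circ> Y) \<le> N X * N Y"
    and B: "B \<in> BH" and C: "C \<in> BH"
  shows "N (op_add (adj C \<circ> C) (adj B \<circ> B))
         \<le> 2 * ((wN N (op_add B C))\<^sup>2 + (wN N (op_add B (op_scale (-1) C)))\<^sup>2)"
proof -
  have adj_comp_le: "N (adj X \<circ> X) \<le> 4 * (wN N X)\<^sup>2" if X: "X \<in> BH" for X
  proof -
    have "N (adj X \<circ> X) \<le> N X * N X"
      using algebra[OF adj_BH[OF X] X] by (simp add: N_adj X)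
    also have "\<dots> \<le> (2 * wN N X) * (2 * wN N X)"
      using N_le_2wN[OF X] N_nonneg[OF X] by (intro mult_mono) auto
    finally show ?thesis by (simp add: power2_eq_square)
  qed
  define P where "P = op_add B C"
  define Q where "Q = op_add B (op_scale (-1) C)"
  have P: "P \<in> BH" and Q: "Q \<in> BH"
    using B C by (simp_all add: P_def Q_def BH_op_add BH_op_scale)
  have "2 * N (op_add (adj C \<circ> C) (adj B \<circ> B)) = N (op_add (adj P \<circ> P) (adj Q \<circ> Q))"
    using B C by (simp add: P_def Q_def adj_comp_parallelogram N_op_scale BH_op_add BH_comp adj_BH)
  also have "\<dots> \<le> N (adj P \<circ> P) + N (adj Q \<circ> Q)"
    using P Q by (intro N_triangle BH_comp adj_BH)
  also have "\<dots> \<le> 4 * (wN N P)\<^sup>2 + 4 * (wN N Q)\<^sup>2"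
    using P Q by (intro add_mono adj_comp_le)
  finally show ?thesis by (simp add: P_def Q_def)
qed

end

lemma sum_squares_add_abs_diff: "a\<^sup>2 + b\<^sup>2 + (a + b) * \<bar>a - b\<bar> = 2 * (max a b)\<^sup>2"
  for a b :: real
  by (cases "b \<le> a") (simp_all add: max_def power2_eq_square algebra_simps)

theorem theorem2p14:
  fixes N :: "('a::chilbert_space \<Rightarrow> 'a) \<Rightarrow> real"
    and B C :: "'a \<Rightarrow> 'a"
  assumes norm: "is_norm_on_BH N"
    and algebra: "\<forall>X\<in>BH. \<forall>Y\<in>BH. N (X \<circ> Y) \<le> N X * N Y"
    and selfadj: "\<forall>X\<in>BH. N (adj X) = N X"
    and B: "B \<in> BH" and C: "C \<in> BH"
  shows "(1/8) * N (op_add (adj C \<circ> C) (adj B \<circ> B))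
           + (1/2) * max (wN N B) (wN N C) * \<bar>wN N (op_add B C) - wN N (op_add B (op_scale (-1) C))\<bar>
         \<le> (wNe N B C)\<^sup>2"
proof -
  interpret selfadjoint_BH_norm N
    using norm selfadj by unfold_locales auto
  define a where "a = wN N (op_add B C)"
  define b where "b = wN N (op_add B (op_scale (-1) C))"
  define W where "W = wNe N B C"
  have "(1/8) * N (op_add (adj C \<circ> C) (adj B \<circ> B)) + (1/2) * max (wN N B) (wN N C) * \<bar>a - b\<bar>
      \<le> (1/4) * (a\<^sup>2 + b\<^sup>2) + (1/4) * (a + b) * \<bar>a - b\<bar>"
    using N_sum_adj_comp_le[OF _ B C] two_max_wN_le[OF B C] algebra
    by (intro add_mono mult_right_mono) (auto simp: a_def b_def)
  also have "\<dots> = (1/4) * (a\<^sup>2 + b\<^sup>2 + (a + b) * \<bar>a - b\<bar>)"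
    by (simp add: algebra_simps)
  also have "\<dots> = (max a b)\<^sup>2 / 2"
    by (simp add: sum_squares_add_abs_diff)
  also have "\<dots> \<le> W\<^sup>2"
    using max_wN_sum_diff_square_le[OF B C] by (simp add: a_def b_def W_def)
  finally show ?thesis by (simp add: a_def b_def W_def)
qed

end
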